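(* The sequence $\left(\frac{h(n)}{\log n}\right)_{n=2}^\infty$ is $\mathcal I_0$-convergent to $0$; that is, for every $\varepsilon>0$ the set $\{n\ge 2: \frac{h(n)}{\log n}\ge\varepsilon\}$ belongs to $\mathcal I_0$.
   Context: $\mathbb N$ denotes the set of positive integers. For $n>1$ with canonical factorization $n=p_1^{\alpha_1}\cdots p_k^{\alpha_k}$ (distinct primes $p_j$, $\alpha_j\ge1$), $h(n)=\min_{1\le j\le k}\alpha_j$. For $A\subset\mathbb N$ the convergence exponent is $\lambda(A)=\inf\{t>0:\sum_{a\in A}a^{-t}<\infty\}$, and $\mathcal I_0=\{A\subset\mathbb N:\lambda(A)=0\}$. A sequence $(x_n)$ is $\mathcal I$-convergent to $L$ if for every $\varepsilon>0$ the set $\{n:|x_n-L|\ge\varepsilon\}$ belongs to $\mathcal I$. *)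

theory Defs
  imports "HOL-Analysis.Analysis" "HOL-Computational_Algebra.Primes" "HOL-Library.Extended_Real"
begin

definition h_min_exp :: "nat \<Rightarrow> nat" where
  "h_min_exp n = Min ((\<lambda>p. multiplicity p n) ` prime_factors n)"

text \<open>Convergence exponent, valued in the extended reals (infimum of the empty set is \<infinity>).\<close>
definition conv_exp :: "nat set \<Rightarrow> ereal" where
  "conv_exp A = Inf (ereal ` {t::real. t > 0 \<and> (\<lambda>a. real a powr (-t)) summable_on A})"

definition I0 :: "nat set set" where
  "I0 = {A. A \<subseteq> {1..} \<and> conv_exp A = 0}"

end

theory Submission
  imports Defs
begin

text \<open>If \<open>h(n) \<ge> \<epsilon> log n\<close>, then every prime \<open>p\<close> dividing \<open>n\<close> satisfies
\<open>p\<^bsup>\<epsilon> log n\<^esup> \<le> p\<^bsup>h(n)\<^esup> \<le> n\<close>, so \<open>p \<le> e\<^bsup>1/\<epsilon>\<^esup>\<close>: the set in question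
consists of numbers whose prime factors lie in a fixed finite set \<open>S\<close>. For such
numbers the Euler product gives \<open>\<Sum> n\<^bsup>-t\<^esup> \<le> \<Prod>\<^sub>p\<^sub>\<in>\<^sub>S 1/(1 - p\<^bsup>-t\<^esup>) < \<infinity>\<close> for every
\<open>t > 0\<close>, so the convergence exponent is \<open>0\<close>.\<close>

definition smooth_numbers :: "nat set \<Rightarrow> nat set" where
  "smooth_numbers S = {n. n > 0 \<and> prime_factors n \<subseteq> S}"

lemma smooth_numbers_empty: "smooth_numbers {} = {1}"
  unfolding smooth_numbers_def by (auto simp: prime_factorization_empty_iff)

lemma smooth_numbers_insert_cofactor:
  fixes q n :: nat
  assumes "prime q" "n \<in> smooth_numbers (insert q S)"
  shows "n div q ^ multiplicity q n \<in> smooth_numbers S"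
    and "n = q ^ multiplicity q n * (n div q ^ multiplicity q n)"
proof -
  define m where "m = n div q ^ multiplicity q n"
  have n_eq: "n = q ^ multiplicity q n * m"
    unfolding m_def by (simp add: multiplicity_dvd)
  have "\<not> q dvd m"
    unfolding m_def using assms by (intro multiplicity_decompose) (auto simp: smooth_numbers_def)
  moreover have "prime_factors m \<subseteq> prime_factors n"
  proof (rule dvd_prime_factors)
    show "n \<noteq> 0" using assms(2) by (simp add: smooth_numbers_def)
    show "m dvd n" by (subst n_eq) simp
  qed
  ultimately have "prime_factors m \<subseteq> S"
    using assms(2) unfolding smooth_numbers_def by (auto simp: in_prime_factors_iff)
  moreover have "m > 0"
    using assms(2) n_eq unfolding smooth_numbers_def by (auto intro: gr0I)
  ultimately show "n div q ^ multiplicity q n \<in> smooth_numbers S"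
    unfolding m_def smooth_numbers_def by simp
  show "n = q ^ multiplicity q n * (n div q ^ multiplicity q n)"
    using n_eq unfolding m_def .
qed

lemma finite_sum_powr_smooth_numbers_le:
  fixes t :: real
  assumes "finite S" "\<forall>p\<in>S. prime p" "t > 0" "finite F" "F \<subseteq> smooth_numbers S"
  shows "(\<Sum>n\<in>F. real n powr (-t)) \<le> (\<Prod>p\<in>S. 1 / (1 - real p powr (-t)))"
  using assms(1,2,4,5)
proof (induction S arbitrary: F rule: finite_induct)
  case empty
  then have "F \<subseteq> {1}" by (simp add: smooth_numbers_empty)
  then have "(\<Sum>n\<in>F. real n powr (-t)) \<le> (\<Sum>n\<in>{1::nat}. real n powr (-t))"
    by (intro sum_mono2) auto
  then show ?case by simp
next
  case (insert q S)
  define g where "g = (\<lambda>n::nat. real n powr (-t))"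
  define x where "x = real q powr (-t)"
  define cofactor where "cofactor = (\<lambda>n. n div q ^ multiplicity q n)"
  define J where "J = multiplicity q ` F"
  define G where "G = cofactor ` F"
  have q: "prime q" using insert.prems by simp
  have x: "0 < x" "x < 1"
    unfolding x_def using prime_ge_2_nat[OF q] \<open>t > 0\<close> by (auto intro: powr_less_one)
  txt \<open>Write each \<open>n \<in> F\<close> as \<open>q\<^sup>j m\<close> with \<open>m\<close> free of \<open>q\<close>; the sum then
    factors into a geometric series in \<open>q\<^sup>-\<^sup>t\<close> and a sum over \<open>S\<close>-smooth cofactors.\<close>
  have "F \<subseteq> (\<lambda>(j, m). q ^ j * m) ` (J \<times> G)"
    using smooth_numbers_insert_cofactor(2)[OF q] insert.prems(3)
    unfolding J_def G_def cofactor_def by force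
  then have "(\<Sum>n\<in>F. g n) \<le> (\<Sum>n\<in>(\<lambda>(j, m). q ^ j * m) ` (J \<times> G). g n)"
    unfolding g_def using insert.prems(2) unfolding J_def G_def
    by (intro sum_mono2) auto
  also have "\<dots> \<le> (\<Sum>(j, m)\<in>J \<times> G. g (q ^ j * m))"
    using sum_image_le[of "J \<times> G" g "\<lambda>(j, m). q ^ j * m"] insert.prems(2)
    unfolding g_def J_def G_def by (simp add: case_prod_unfold o_def)
  also have "\<dots> = (\<Sum>j\<in>J. x ^ j) * (\<Sum>m\<in>G. g m)"
  proof -
    have "g (q ^ j * m) = x ^ j * g m" for j m
      using prime_gt_0_nat[OF q] unfolding g_def x_def
      by (simp add: powr_mult powr_power powr_powr mult.commute flip: powr_realpow)
    then show ?thesis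
      by (simp add: sum.cartesian_product sum_product)
  qed
  also have "\<dots> \<le> (1 / (1 - x)) * (\<Prod>p\<in>S. 1 / (1 - real p powr (-t)))"
  proof (rule mult_mono)
    have "(\<Sum>j\<in>J. x ^ j) \<le> (\<Sum>j. x ^ j)"
      using x insert.prems(2) unfolding J_def by (intro sum_le_suminf summable_geometric) auto
    then show "(\<Sum>j\<in>J. x ^ j) \<le> 1 / (1 - x)"
      using suminf_geometric[of x] x by simp
    have "G \<subseteq> smooth_numbers S"
      using smooth_numbers_insert_cofactor(1)[OF q] insert.prems(3)
      unfolding G_def cofactor_def by blast
    then show "(\<Sum>m\<in>G. g m) \<le> (\<Prod>p\<in>S. 1 / (1 - real p powr (-t)))"
      unfolding g_def using insert.IH insert.prems(1,2) unfolding G_def by simp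
  qed (use x in \<open>auto simp: g_def intro: sum_nonneg\<close>)
  finally show ?case
    using insert.hyps unfolding g_def x_def by simp
qed

lemma powr_summable_on_smooth_numbers:
  fixes t :: real
  assumes "finite S" "\<forall>p\<in>S. prime p" "t > 0"
  shows "(\<lambda>n. real n powr (-t)) summable_on smooth_numbers S"
  using finite_sum_powr_smooth_numbers_le[OF assms]
  by (intro nonneg_bdd_above_summable_on bdd_aboveI) auto

lemma conv_exp_eq_0_if_summable:
  assumes "\<And>t. t > 0 \<Longrightarrow> (\<lambda>a. real a powr (-t)) summable_on A"
  shows "conv_exp A = 0"
proof -
  have "conv_exp A = Inf (ereal ` {t. t > 0})"
    unfolding conv_exp_def using assms by metis
  also have "\<dots> = 0"
  proof (rule antisym)
    show "Inf (ereal ` {t. t > 0}) \<le> 0"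
    proof (subst Inf_le_iff, intro allI impI)
      fix y :: ereal
      assume "y > 0"
      then obtain z where "0 < ereal z" "ereal z < y"
        using ereal_dense2 by blast
      then show "\<exists>a\<in>ereal ` {t. t > 0}. a < y" by auto
    qed
  qed (auto intro: Inf_greatest)
  finally show ?thesis .
qed

lemma prime_factor_le_exp_if_h_min_exp_ge:
  fixes \<epsilon> :: real and n p :: nat
  assumes "\<epsilon> > 0" "n \<ge> 2" "\<epsilon> * ln n \<le> h_min_exp n" "p \<in> prime_factors n"
  shows "real p \<le> exp (1 / \<epsilon>)"
proof -
  define \<alpha> where "\<alpha> = multiplicity p n"
  have p: "prime p" "real p \<ge> 2"
    using assms(4) prime_ge_2_nat by auto
  have h_le: "h_min_exp n \<le> \<alpha>"
    unfolding h_min_exp_def \<alpha>_def using assms(4) by simp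
  have "p ^ \<alpha> \<le> n"
    unfolding \<alpha>_def using assms(2) by (intro dvd_imp_le multiplicity_dvd) auto
  then have "ln (real p ^ \<alpha>) \<le> ln n"
    using p assms(2) by (subst ln_le_cancel_iff) (auto simp flip: of_nat_power)
  then have "\<alpha> * ln p \<le> ln n"
    using p by (simp add: ln_realpow)
  then have "\<alpha> * (\<epsilon> * ln p) \<le> \<epsilon> * ln n"
    using assms(1) by (simp add: mult.left_commute)
  also have "\<dots> \<le> real \<alpha> * 1"
    using assms(3) h_le by simp
  finally have "\<alpha> * (\<epsilon> * ln p) \<le> real \<alpha> * 1" .
  moreover have "\<alpha> > 0"
    unfolding \<alpha>_def using p assms(2,4) by (simp add: prime_multiplicity_gt_zero_iff in_prime_factors_iff)
  ultimately have "ln p \<le> 1 / \<epsilon>"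
    using assms(1) by (simp add: mult_le_cancel_left pos_le_divide_eq mult.commute)
  then show ?thesis
    using p by (metis exp_le_cancel_iff exp_ln of_nat_0_less_iff prime_gt_0_nat)
qed

lemma finite_primes_le: "finite {p::nat. prime p \<and> real p \<le> x}"
  by (rule finite_subset[of _ "{..nat \<lceil>x\<rceil>}"]) (auto simp: le_nat_iff, linarith)

theorem theorem6:
  fixes \<epsilon> :: real
  assumes "\<epsilon> > 0"
  shows "{n::nat. n \<ge> 2 \<and> real (h_min_exp n) / ln (real n) \<ge> \<epsilon>} \<in> I0"
proof -
  define A where "A = {n::nat. n \<ge> 2 \<and> real (h_min_exp n) / ln (real n) \<ge> \<epsilon>}"
  define S where "S = {p::nat. prime p \<and> real p \<le> exp (1 / \<epsilon>)}"
  have "A \<subseteq> smooth_numbers S"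
  proof
    fix n assume "n \<in> A"
    then have "n \<ge> 2" "\<epsilon> * ln n \<le> h_min_exp n"
      unfolding A_def by (auto simp: pos_le_divide_eq)
    then show "n \<in> smooth_numbers S"
      using prime_factor_le_exp_if_h_min_exp_ge[OF assms]
      unfolding smooth_numbers_def S_def by auto
  qed
  moreover have "finite S" "\<forall>p\<in>S. prime p"
    unfolding S_def by (simp_all add: finite_primes_le)
  ultimately have "conv_exp A = 0"
    using powr_summable_on_smooth_numbers summable_on_subset_banach
    by (metis conv_exp_eq_0_if_summable)
  moreover have "A \<subseteq> {1..}"
    unfolding A_def by auto
  ultimately show ?thesis
    unfolding I0_def A_def by simp
qed

end
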